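(* For any set $\Phi\cup\{\psi\}$ of $\mathsf{BSML}$-formulas, if $\Phi\vdash\psi$ in the natural deduction system $\mathcal{S}$ described below, then $\Phi\models\psi$.
   Context: Syntax: $\mathsf{BSML}$-formulas $\phi ::= p \mid \neg\phi \mid (\phi\wedge\phi) \mid (\phi\vee\phi) \mid \Diamond\phi \mid \mathrm{NE}$. Classical formulas ($\alpha,\beta$): the $\mathrm{NE}$-free ones. $\Box\phi:=\neg\Diamond\neg\phi$; $\bot:=p\wedge\neg p$; $\bot\!\!\!\bot:=\bot\wedge\mathrm{NE}$. Semantics on Kripke models $M=(W,R,V)$, states $s\subseteq W$: $s\models p$ iff $s\subseteq V(p)$; $s\dashv p$ iff $s\cap V(p)=\emptyset$; $s\models\mathrm{NE}$ iff $s\ne\emptyset$; $s\dashv\mathrm{NE}$ iff $s=\emptyset$; $s\models\neg\phi$ iff $s\dashv\phi$; $s\dashv\neg\phi$ iff $s\models\phi$; $s\models\phi\wedge\psi$ iff both; $s\dashv\phi\wedge\psi$ iff $s=t\cup u$, $t\dashv\phi$, $u\dashv\psi$; $s\models\phi\vee\psi$ iff $s=t\cup u$, $t\models\phi$, $u\models\psi$; $s\dashv\phi\vee\psi$ iff $s\dashv\phi$ and $s\dashv\psi$; $s\models\Diamond\phi$ iff each $w\in s$ has a nonempty $t\subseteq R[w]$ with $t\models\phi$; $s\dashv\Diamond\phi$ iff $R[w]\dashv\phi$ for all $w\in s$. $\Phi\models\psi$ iff every state supporting all of $\Phi$ supports $\psi$. An occurrence $[\psi]$ of a subformula in $\phi$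 is distributive if it is not within the scope of any $\neg$ or $\Diamond$ in $\phi$ ($\Box=\neg\Diamond\neg$); $\phi[\chi/\psi]$ replaces that occurrence by $\chi$. System $\mathcal{S}$ ($\Phi\vdash\psi$ iff some natural deduction derivation of $\psi$ has all undischarged assumptions in $\Phi$; "$A\Leftrightarrow B$" = both one-step rules): (a) $\wedge$I; $\wedge$E. (b) $\neg$I: from a derivation of $\bot$ from $\alpha$ infer $\neg\alpha$ discharging $\alpha$, provided its undischarged assumptions contain no $\mathrm{NE}$; from $\alpha,\neg\alpha$ infer $\beta$; $\neg\neg\phi\Leftrightarrow\phi$; $\neg(\phi\wedge\psi)\Leftrightarrow\neg\phi\vee\neg\psi$; $\neg(\phi\vee\psi)\Leftrightarrow\neg\phi\wedge\neg\psi$; $\neg\mathrm{NE}\Leftrightarrow\bot$. (c) from $\phi$ infer $\phi\vee\psi$ if $\psi$ contains no $\mathrm{NE}$; from $\phi$ infer $\phi\vee\phi$; from $\phi\vee\psi$ infer $\psi\vee\phi$; $\vee$E: from $\phi\vee\psi$ and derivations of $\chi$ from $\phi$ and from $\psi$ infer $\chi$ (discharging), provided undischarged assumptions of the subderivations contain no $\mathrm{NE}$; from $\phi\vee\psi$ and a derivation of $\chi$ from $\psi$ whose undischarged assumptions contain no $\mathrm{NE}$ infer $\phi\vee\chi$. (d) from $\bot\vee\phi$ infer $\phi$; from $\bot\!\!\!\bot\vee\phi$ infer any $\psi$. (e) if $\psi$ derivable from $\phi$ alone, from $\Diamond\phi$ infer $\Diamond\psi$; if $\psi$ derivable from $\phi_1,\dots,\phi_n$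 alone, from $\Box\phi_1,\dots,\Box\phi_n$ infer $\Box\psi$; $\neg\Diamond\phi\Leftrightarrow\Box\neg\phi$. (f) from $\Diamond(\phi\vee(\psi\wedge\mathrm{NE}))$ infer $\Diamond\psi$; from $\Diamond\phi,\Diamond\psi$ infer $\Diamond(\phi\vee\psi)$; from $\Box(\phi\wedge\mathrm{NE})$ infer $\Diamond\phi$; from $\Box\phi,\Diamond\psi$ infer $\Box(\phi\vee\psi)$. (g) for a distributive occurrence $[\psi]$ in $\phi$: from $\phi$, a derivation of $\chi$ from $\phi[\psi\wedge\mathrm{NE}/\psi]$ and a derivation of $\chi$ from $\phi[\psi\wedge\bot/\psi]$, infer $\chi$ (discharging); from $\Diamond\phi$ infer $\Diamond\phi[\psi\wedge\mathrm{NE}/\psi]\vee\Diamond\phi[\psi\wedge\bot/\psi]$; from $\Box\phi$ infer $\Box\phi[\psi\wedge\mathrm{NE}/\psi]\vee\Box\phi[\psi\wedge\bot/\psi]$. *)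

theory Defs
  imports Main
begin

datatype form =
    Atom nat
  | Neg form
  | Conj form form
  | Disj form form
  | Dia form
  | NE

fun classical :: "form \<Rightarrow> bool" where
  "classical (Atom p) = True"
| "classical (Neg f) = classical f"
| "classical (Conj f g) = (classical f \<and> classical g)"
| "classical (Disj f g) = (classical f \<and> classical g)"
| "classical (Dia f) = classical f"
| "classical NE = False"

definition Box :: "form \<Rightarrow> form" where
  "Box f = Neg (Dia (Neg f))"

definition Bot :: form where
  "Bot = Conj (Atom 0) (Neg (Atom 0))"

definition BotBot :: form where
  "BotBot = Conj Bot NE"

section \<open>Distributive occurrences: one-hole contexts built only from \<and> and \<or>\<close>

datatype ctx =
    Hole
  | CConjL ctx form
  | CConjR form ctx
  | CDisjL ctx form
  | CDisjR form ctx

fun plug :: "ctx \<Rightarrow> form \<Rightarrow> form" where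
  "plug Hole g = g"
| "plug (CConjL c f) g = Conj (plug c g) f"
| "plug (CConjR f c) g = Conj f (plug c g)"
| "plug (CDisjL c f) g = Disj (plug c g) f"
| "plug (CDisjR f c) g = Disj f (plug c g)"

section \<open>Semantics: Kripke models with W = UNIV of type 'w\<close>

record 'w kmodel =
  acc :: "'w \<Rightarrow> 'w \<Rightarrow> bool"
  val :: "nat \<Rightarrow> 'w set"

definition succs :: "'w kmodel \<Rightarrow> 'w \<Rightarrow> 'w set" where
  "succs M w = {v. acc M w v}"

text \<open>sem M True s f: s supports f;  sem M False s f: s antisupports f.\<close>
fun sem :: "'w kmodel \<Rightarrow> bool \<Rightarrow> 'w set \<Rightarrow> form \<Rightarrow> bool" where
  "sem M True s (Atom p) = (s \<subseteq> val M p)"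
| "sem M False s (Atom p) = (s \<inter> val M p = {})"
| "sem M True s NE = (s \<noteq> {})"
| "sem M False s NE = (s = {})"
| "sem M b s (Neg f) = sem M (\<not> b) s f"
| "sem M True s (Conj f g) = (sem M True s f \<and> sem M True s g)"
| "sem M False s (Conj f g) =
     (\<exists>t u. s = t \<union> u \<and> sem M False t f \<and> sem M False u g)"
| "sem M True s (Disj f g) =
     (\<exists>t u. s = t \<union> u \<and> sem M True t f \<and> sem M True u g)"
| "sem M False s (Disj f g) = (sem M False s f \<and> sem M False s g)"
| "sem M True s (Dia f) =
     (\<forall>w\<in>s. \<exists>t. t \<noteq> {} \<and> t \<subseteq> succs M w \<and> sem M True t f)"
| "sem M False s (Dia f) = (\<forall>w\<in>s. sem M False (succs M w) f)"

abbreviation supp :: "'w kmodel \<Rightarrow> 'w set \<Rightarrow> form \<Rightarrow> bool" where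
  "supp M s f \<equiv> sem M True s f"

abbreviation anti :: "'w kmodel \<Rightarrow> 'w set \<Rightarrow> form \<Rightarrow> bool" where
  "anti M s f \<equiv> sem M False s f"

text \<open>Entailment restricted to models over the type 'w; since 'w is arbitrary
  (universally quantified at theorem level), this covers all Kripke models.\<close>
definition entails :: "'w itself \<Rightarrow> form set \<Rightarrow> form \<Rightarrow> bool" where
  "entails _ Phi g \<longleftrightarrow>
     (\<forall>(M :: 'w kmodel) (s :: 'w set). (\<forall>f\<in>Phi. supp M s f) \<longrightarrow> supp M s g)"

text \<open>ded G f: there is a derivation of f all of whose undischarged assumptions
  are in G.  Side conditions "undischarged assumptions of the subderivation contain
  no NE" are rendered by requiring the subderivation's remaining assumption set D
  (a subset of G) to consist of classical formulas.\<close>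

definition NEfree :: "form set \<Rightarrow> bool" where
  "NEfree D \<longleftrightarrow> (\<forall>f\<in>D. classical f)"

inductive ded :: "form set \<Rightarrow> form \<Rightarrow> bool" where
  Assm: "f \<in> G \<Longrightarrow> ded G f"
| ConjI: "ded G f \<Longrightarrow> ded G g \<Longrightarrow> ded G (Conj f g)"
| ConjE1: "ded G (Conj f g) \<Longrightarrow> ded G f"
| ConjE2: "ded G (Conj f g) \<Longrightarrow> ded G g"
| NegI: "classical a \<Longrightarrow> NEfree D \<Longrightarrow> D \<subseteq> G \<Longrightarrow> ded (insert a D) Bot
          \<Longrightarrow> ded G (Neg a)"
| NegE: "classical a \<Longrightarrow> classical b \<Longrightarrow> ded G a \<Longrightarrow> ded G (Neg a) \<Longrightarrow> ded G b"
| DNegE: "ded G (Neg (Neg f)) \<Longrightarrow> ded G f"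
| DNegI: "ded G f \<Longrightarrow> ded G (Neg (Neg f))"
| DMConj1: "ded G (Neg (Conj f g)) \<Longrightarrow> ded G (Disj (Neg f) (Neg g))"
| DMConj2: "ded G (Disj (Neg f) (Neg g)) \<Longrightarrow> ded G (Neg (Conj f g))"
| DMDisj1: "ded G (Neg (Disj f g)) \<Longrightarrow> ded G (Conj (Neg f) (Neg g))"
| DMDisj2: "ded G (Conj (Neg f) (Neg g)) \<Longrightarrow> ded G (Neg (Disj f g))"
| NegNE1: "ded G (Neg NE) \<Longrightarrow> ded G Bot"
| NegNE2: "ded G Bot \<Longrightarrow> ded G (Neg NE)"
| DisjI: "classical g \<Longrightarrow> ded G f \<Longrightarrow> ded G (Disj f g)"
| DisjDup: "ded G f \<Longrightarrow> ded G (Disj f f)"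
| DisjComm: "ded G (Disj f g) \<Longrightarrow> ded G (Disj g f)"
| DisjE: "ded G (Disj f g) \<Longrightarrow> NEfree D1 \<Longrightarrow> NEfree D2 \<Longrightarrow> D1 \<subseteq> G \<Longrightarrow> D2 \<subseteq> G
          \<Longrightarrow> ded (insert f D1) h \<Longrightarrow> ded (insert g D2) h \<Longrightarrow> ded G h"
| DisjSub: "ded G (Disj f g) \<Longrightarrow> NEfree D \<Longrightarrow> D \<subseteq> G
          \<Longrightarrow> ded (insert g D) h \<Longrightarrow> ded G (Disj f h)"
| BotDisj: "ded G (Disj Bot f) \<Longrightarrow> ded G f"
| BotBotDisj: "ded G (Disj BotBot f) \<Longrightarrow> ded G g"
| DiaMon: "ded {f} g \<Longrightarrow> ded G (Dia f) \<Longrightarrow> ded G (Dia g)"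
| BoxMon: "ded (set fs) g \<Longrightarrow> (\<forall>f\<in>set fs. ded G (Box f)) \<Longrightarrow> ded G (Box g)"
| NegDiaBox1: "ded G (Neg (Dia f)) \<Longrightarrow> ded G (Box (Neg f))"
| NegDiaBox2: "ded G (Box (Neg f)) \<Longrightarrow> ded G (Neg (Dia f))"
| DiaSep: "ded G (Dia (Disj f (Conj g NE))) \<Longrightarrow> ded G (Dia g)"
| DiaJoin: "ded G (Dia f) \<Longrightarrow> ded G (Dia g) \<Longrightarrow> ded G (Dia (Disj f g))"
| BoxDia: "ded G (Box (Conj f NE)) \<Longrightarrow> ded G (Dia f)"
| BoxDiaJoin: "ded G (Box f) \<Longrightarrow> ded G (Dia g) \<Longrightarrow> ded G (Box (Disj f g))"
| Split: "ded G (plug c g) \<Longrightarrow> ded (insert (plug c (Conj g NE)) G) h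
          \<Longrightarrow> ded (insert (plug c (Conj g Bot)) G) h \<Longrightarrow> ded G h"
| DiaSplit: "ded G (Dia (plug c g)) \<Longrightarrow>
          ded G (Disj (Dia (plug c (Conj g NE))) (Dia (plug c (Conj g Bot))))"
| BoxSplit: "ded G (Box (plug c g)) \<Longrightarrow>
          ded G (Disj (Box (plug c (Conj g NE))) (Box (plug c (Conj g Bot))))"

end

theory Submission
  imports Defs
begin

text \<open>Soundness is proved rule by rule, by induction on derivations with the state
  generalised, since subderivations are used at substates. Every formula is closed under
  unions of states, which justifies \<or>-elimination. NE-free formulas are moreover flat:
  support and antisupport are determined pointwise on singletons, where they are
  complementary; this validates \<not>-introduction and explains why the discharging rules
  require NE-free side assumptions, which then descend to substates. The splitting rules
  (g) hold because the substate supporting the distinguished occurrence is either empty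
  (support of \<bottom>) or not (support of NE).\<close>

lemma sem_union_closed: "sem M b s f \<Longrightarrow> sem M b t f \<Longrightarrow> sem M b (s \<union> t) f"
proof (induction f arbitrary: b s t)
  case (Conj f g)
  show ?case
  proof (cases b)
    case False
    with Conj.prems obtain s1 s2 t1 t2 where "s = s1 \<union> s2" "t = t1 \<union> t2"
      "anti M s1 f" "anti M s2 g" "anti M t1 f" "anti M t2 g" by auto
    with False Conj.IH have "s \<union> t = (s1 \<union> t1) \<union> (s2 \<union> t2)"
      "anti M (s1 \<union> t1) f" "anti M (s2 \<union> t2) g" by auto
    with False show ?thesis by auto
  qed (use Conj in auto)
next
  case (Disj f g)
  show ?case
  proof (cases b)
    case True
    with Disj.prems obtain s1 s2 t1 t2 where "s = s1 \<union> s2" "t = t1 \<union> t2"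
      "supp M s1 f" "supp M s2 g" "supp M t1 f" "supp M t2 g" by auto
    with True Disj.IH have "s \<union> t = (s1 \<union> t1) \<union> (s2 \<union> t2)"
      "supp M (s1 \<union> t1) f" "supp M (s2 \<union> t2) g" by auto
    with True show ?thesis by auto
  qed (use Disj in auto)
next
  case (Atom p)
  then show ?case by (cases b) auto
next
  case (Neg f)
  then show ?case by simp
next
  case (Dia f)
  then show ?case by (cases b) auto
next
  case NE
  then show ?case by (cases b) auto
qed

lemma union_decomp_flat_iff:
  assumes P: "\<And>s. P s \<longleftrightarrow> (\<forall>w\<in>s. P {w})"
    and Q: "\<And>s. Q s \<longleftrightarrow> (\<forall>w\<in>s. Q {w})"
  shows "(\<exists>t u. s = t \<union> u \<and> P t \<and> Q u) \<longleftrightarrow> (\<forall>w\<in>s. P {w} \<or> Q {w})"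
proof
  assume "\<exists>t u. s = t \<union> u \<and> P t \<and> Q u"
  then show "\<forall>w\<in>s. P {w} \<or> Q {w}" using P Q by blast
next
  assume "\<forall>w\<in>s. P {w} \<or> Q {w}"
  then have "s = {w\<in>s. P {w}} \<union> {w\<in>s. Q {w}}" by blast
  moreover have "P {w\<in>s. P {w}}" "Q {w\<in>s. Q {w}}"
    using P[of "{w\<in>s. P {w}}"] Q[of "{w\<in>s. Q {w}}"] by auto
  ultimately show "\<exists>t u. s = t \<union> u \<and> P t \<and> Q u" by blast
qed

lemma classical_flat:
  "classical f \<Longrightarrow> sem M b s f \<longleftrightarrow> (\<forall>w\<in>s. sem M b {w} f)"
proof (induction f arbitrary: b s)
  case (Atom p)
  show ?case by (cases b) auto
next
  case (Neg f)
  show ?case using Neg.IH[of "\<not> b" s] Neg.prems by simp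
next
  case (Conj f g)
  then have "classical f" "classical g" by simp_all
  note flat_f = Conj.IH(1)[OF this(1)] and flat_g = Conj.IH(2)[OF this(2)]
  show ?case
  proof (cases b)
    case True
    then show ?thesis by (simp only: sem.simps flat_f[of True s] flat_g[of True s] ball_conj_distrib)
  next
    case False
    then show ?thesis
      by (simp only: sem.simps union_decomp_flat_iff[OF flat_f[of False] flat_g[of False]]) blast
  qed
next
  case (Disj f g)
  then have "classical f" "classical g" by simp_all
  note flat_f = Disj.IH(1)[OF this(1)] and flat_g = Disj.IH(2)[OF this(2)]
  show ?case
  proof (cases b)
    case True
    then show ?thesis
      by (simp only: sem.simps union_decomp_flat_iff[OF flat_f[of True] flat_g[of True]]) blast
  next
    case False
    then show ?thesis by (simp only: sem.simps flat_f[of False s] flat_g[of False s] ball_conj_distrib)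
  qed
next
  case (Dia f)
  show ?case by (cases b) auto
qed simp

lemma classical_empty: "classical f \<Longrightarrow> sem M b {} f"
  using classical_flat[of f M b "{}"] by simp

lemma classical_downward_closed:
  "classical f \<Longrightarrow> sem M b s f \<Longrightarrow> t \<subseteq> s \<Longrightarrow> sem M b t f"
  by (auto simp: classical_flat[of f M b s] classical_flat[of f M b t])

lemma classical_bivalent_singleton:
  "classical f \<Longrightarrow> supp M {w} f \<longleftrightarrow> \<not> anti M {w} f"
proof (induction f arbitrary: w)
  case (Conj f g)
  then have "classical f" "classical g" by simp_all
  then have "anti M {w} (Conj f g) \<longleftrightarrow> anti M {w} f \<or> anti M {w} g"
    by (simp only: sem.simps union_decomp_flat_iff[OF classical_flat classical_flat]) simp
  with Conj show ?case by simp
next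
  case (Disj f g)
  then have "classical f" "classical g" by simp_all
  then have "supp M {w} (Disj f g) \<longleftrightarrow> supp M {w} f \<or> supp M {w} g"
    by (simp only: sem.simps union_decomp_flat_iff[OF classical_flat classical_flat]) simp
  with Disj show ?case by simp
next
  case (Dia f)
  then have "classical f" by simp
  have "supp M {w} (Dia f) \<longleftrightarrow> (\<exists>v\<in>succs M w. supp M {v} f)"
  proof
    assume "supp M {w} (Dia f)"
    then obtain t where "t \<noteq> {}" "t \<subseteq> succs M w" "supp M t f" by auto
    then show "\<exists>v\<in>succs M w. supp M {v} f"
      using classical_flat[OF \<open>classical f\<close>, of M True t] by blast
  next
    assume "\<exists>v\<in>succs M w. supp M {v} f"
    then obtain v where "v \<in> succs M w" "supp M {v} f" ..
    then show "supp M {w} (Dia f)" by (auto intro: exI[of _ "{v}"])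
  qed
  moreover have "anti M {w} (Dia f) \<longleftrightarrow> (\<forall>v\<in>succs M w. anti M {v} f)"
    using classical_flat[OF \<open>classical f\<close>, of M False "succs M w"] by simp
  ultimately show ?case using Dia by simp
qed simp_all

lemma classical_supp_anti_empty:
  "classical f \<Longrightarrow> supp M s f \<Longrightarrow> anti M s f \<Longrightarrow> s = {}"
  using classical_flat[of f M True s] classical_flat[of f M False s]
    classical_bivalent_singleton[of f M] by blast

lemma classical_supp_Neg_iff:
  "classical f \<Longrightarrow> supp M s (Neg f) \<longleftrightarrow> (\<forall>w\<in>s. \<not> supp M {w} f)"
  using classical_flat[of f M False s] classical_bivalent_singleton[of f M] by simp

lemma NEfree_supp_downward:
  "NEfree D \<Longrightarrow> \<forall>f\<in>D. supp M s f \<Longrightarrow> t \<subseteq> s \<Longrightarrow> \<forall>f\<in>D. supp M t f"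
  unfolding NEfree_def using classical_downward_closed by blast

lemma supp_Bot_iff: "supp M s Bot \<longleftrightarrow> s = {}"
  unfolding Bot_def by auto

lemma not_supp_Disj_BotBot: "\<not> supp M s (Disj BotBot f)"
  unfolding BotBot_def Bot_def by auto

lemma supp_Neg_if_entails_Bot:
  assumes "classical a" and "NEfree D" and "\<forall>g\<in>D. supp M s g"
    and "\<And>t. \<forall>g\<in>insert a D. supp M t g \<Longrightarrow> supp M t Bot"
  shows "supp M s (Neg a)"
proof -
  have "\<not> supp M {w} a" if "w \<in> s" for w
  proof
    assume "supp M {w} a"
    moreover have "\<forall>g\<in>D. supp M {w} g"
      using NEfree_supp_downward[OF assms(2,3)] that by blast
    ultimately have "supp M {w} Bot" using assms(4) by simp
    then show False by (simp add: supp_Bot_iff)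
  qed
  then show ?thesis using classical_supp_Neg_iff[OF assms(1)] by blast
qed

lemma supp_Disj_elim_NEfree:
  assumes "supp M s (Disj f g)" and "NEfree D1" and "NEfree D2"
    and "\<forall>x\<in>D1. supp M s x" and "\<forall>x\<in>D2. supp M s x"
    and "\<And>t. \<forall>x\<in>insert f D1. supp M t x \<Longrightarrow> supp M t h"
    and "\<And>t. \<forall>x\<in>insert g D2. supp M t x \<Longrightarrow> supp M t h"
  shows "supp M s h"
proof -
  obtain t u where tu: "s = t \<union> u" "supp M t f" "supp M u g" using assms(1) by auto
  have "\<forall>x\<in>D1. supp M t x" "\<forall>x\<in>D2. supp M u x"
    using NEfree_supp_downward assms(2-5) tu(1) by blast+
  with tu assms(6,7) have "supp M t h" "supp M u h" by simp_all
  with tu(1) show ?thesis using sem_union_closed by blast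
qed

lemma supp_Disj_subst_NEfree:
  assumes "supp M s (Disj f g)" and "NEfree D" and "\<forall>x\<in>D. supp M s x"
    and "\<And>t. \<forall>x\<in>insert g D. supp M t x \<Longrightarrow> supp M t h"
  shows "supp M s (Disj f h)"
proof -
  obtain t u where tu: "s = t \<union> u" "supp M t f" "supp M u g" using assms(1) by auto
  have "\<forall>x\<in>D. supp M u x" using NEfree_supp_downward assms(2,3) tu(1) by blast
  with tu assms(4) show ?thesis by auto
qed

lemma supp_Box_iff: "supp M s (Box f) \<longleftrightarrow> (\<forall>w\<in>s. supp M (succs M w) f)"
  unfolding Box_def by simp

lemma supp_Dia_flat: "supp M s (Dia f) \<longleftrightarrow> (\<forall>w\<in>s. supp M {w} (Dia f))"
  by simp

lemma supp_Box_flat: "supp M s (Box f) \<longleftrightarrow> (\<forall>w\<in>s. supp M {w} (Box f))"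
  by (simp add: supp_Box_iff)

lemma supp_plug_split:
  "supp M s (plug c g) \<Longrightarrow> supp M s (plug c (Conj g NE)) \<or> supp M s (plug c (Conj g Bot))"
proof (induction c arbitrary: s)
  case Hole
  then show ?case by (auto simp: supp_Bot_iff)
next
  case (CDisjL c f)
  then obtain t u where "s = t \<union> u" "supp M t (plug c g)" "supp M u f" by auto
  with CDisjL.IH[of t] show ?case by auto
next
  case (CDisjR f c)
  then obtain t u where "s = t \<union> u" "supp M t f" "supp M u (plug c g)" by auto
  with CDisjR.IH[of u] show ?case by auto
qed auto

lemma supp_Disj_flat_iff:
  assumes "\<And>s. supp M s f \<longleftrightarrow> (\<forall>w\<in>s. supp M {w} f)"
    and "\<And>s. supp M s g \<longleftrightarrow> (\<forall>w\<in>s. supp M {w} g)"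
  shows "supp M s (Disj f g) \<longleftrightarrow> (\<forall>w\<in>s. supp M {w} f \<or> supp M {w} g)"
  using union_decomp_flat_iff[OF assms] by simp

lemma supp_DiaE:
  assumes "supp M s (Dia f)" and "w \<in> s"
  obtains t where "t \<noteq> {}" and "t \<subseteq> succs M w" and "supp M t f"
  using assms by (meson sem.simps(10))

lemma supp_Dia_mono:
  assumes "\<And>t. supp M t f \<Longrightarrow> supp M t g" and "supp M s (Dia f)"
  shows "supp M s (Dia g)"
proof (simp only: sem.simps(10), intro ballI)
  fix w assume "w \<in> s"
  with assms(2) obtain t where "t \<noteq> {}" "t \<subseteq> succs M w" "supp M t f" by (rule supp_DiaE)
  with assms(1) show "\<exists>t. t \<noteq> {} \<and> t \<subseteq> succs M w \<and> supp M t g" by blast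
qed

lemma supp_Dia_Disj_NE_elim:
  assumes "supp M s (Dia (Disj f (Conj g NE)))"
  shows "supp M s (Dia g)"
proof (simp only: sem.simps(10), intro ballI)
  fix w assume "w \<in> s"
  with assms obtain t where "t \<subseteq> succs M w" "supp M t (Disj f (Conj g NE))"
    by (rule supp_DiaE)
  then obtain u where "u \<subseteq> succs M w" "supp M u g" "u \<noteq> {}" by auto
  then show "\<exists>u. u \<noteq> {} \<and> u \<subseteq> succs M w \<and> supp M u g" by blast
qed

lemma supp_Dia_Disj:
  assumes "supp M s (Dia f)" and "supp M s (Dia g)"
  shows "supp M s (Dia (Disj f g))"
proof (simp only: sem.simps(10), intro ballI)
  fix w assume "w \<in> s"
  obtain t where "t \<noteq> {}" "t \<subseteq> succs M w" "supp M t f"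
    using assms(1) \<open>w \<in> s\<close> by (rule supp_DiaE)
  moreover obtain u where "u \<subseteq> succs M w" "supp M u g"
    using assms(2) \<open>w \<in> s\<close> by (rule supp_DiaE)
  ultimately have "t \<union> u \<noteq> {} \<and> t \<union> u \<subseteq> succs M w \<and> supp M (t \<union> u) (Disj f g)" by auto
  then show "\<exists>v. v \<noteq> {} \<and> v \<subseteq> succs M w \<and> supp M v (Disj f g)" ..
qed

lemma supp_Box_NE_Dia: "supp M s (Box (Conj f NE)) \<Longrightarrow> supp M s (Dia f)"
  by (auto simp: supp_Box_iff)

lemma supp_Box_Dia_Disj:
  assumes "supp M s (Box f)" and "supp M s (Dia g)"
  shows "supp M s (Box (Disj f g))"
  unfolding supp_Box_iff
proof
  fix w assume "w \<in> s"
  obtain u where "u \<subseteq> succs M w" "supp M u g"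
    using assms(2) \<open>w \<in> s\<close> by (rule supp_DiaE)
  moreover have "supp M (succs M w) f" using assms(1) \<open>w \<in> s\<close> by (simp add: supp_Box_iff)
  ultimately have "succs M w = succs M w \<union> u \<and> supp M (succs M w) f \<and> supp M u g" by blast
  then show "supp M (succs M w) (Disj f g)" by auto
qed

lemma supp_Dia_plug_split:
  assumes "supp M s (Dia (plug c g))"
  shows "supp M s (Disj (Dia (plug c (Conj g NE))) (Dia (plug c (Conj g Bot))))"
proof -
  have "supp M {w} (Dia (plug c (Conj g NE))) \<or> supp M {w} (Dia (plug c (Conj g Bot)))"
    if w: "w \<in> s" for w
  proof -
    obtain t where "t \<noteq> {}" "t \<subseteq> succs M w" "supp M t (plug c g)"
      using assms w by (rule supp_DiaE)
    with supp_plug_split[of M t c g] show ?thesis by auto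
  qed
  then show ?thesis unfolding supp_Disj_flat_iff[OF supp_Dia_flat supp_Dia_flat] by blast
qed

lemma supp_Box_plug_split:
  assumes "supp M s (Box (plug c g))"
  shows "supp M s (Disj (Box (plug c (Conj g NE))) (Box (plug c (Conj g Bot))))"
proof -
  have "supp M {w} (Box (plug c (Conj g NE))) \<or> supp M {w} (Box (plug c (Conj g Bot)))"
    if "w \<in> s" for w
    using assms that supp_plug_split[of M "succs M w" c g] by (simp add: supp_Box_iff)
  then show ?thesis unfolding supp_Disj_flat_iff[OF supp_Box_flat supp_Box_flat] by blast
qed

lemma ded_sound: "ded G f \<Longrightarrow> \<forall>g\<in>G. supp M s g \<Longrightarrow> supp M s f"
proof (induction arbitrary: s rule: ded.induct)
  case (NegI a D G)
  show ?case
    by (rule supp_Neg_if_entails_Bot[OF NegI.hyps(1,2) _ NegI.IH])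
      (use NegI.hyps(3) NegI.prems in blast)
next
  case (NegE a b G)
  have "supp M s a" "anti M s a" using NegE.IH(1,2)[OF NegE.prems] by simp_all
  then have "s = {}" using classical_supp_anti_empty[OF NegE.hyps(1)] by blast
  then show ?case using classical_empty[OF NegE.hyps(2)] by simp
next
  case (DisjE G f g D1 D2 h)
  show ?case
    by (rule supp_Disj_elim_NEfree[OF DisjE.IH(1)[OF DisjE.prems] DisjE.hyps(2,3) _ _
          DisjE.IH(2,3)])
      (use DisjE.hyps(4,5) DisjE.prems in blast)+
next
  case (DisjSub G f g D h)
  show ?case
    by (rule supp_Disj_subst_NEfree[OF DisjSub.IH(1)[OF DisjSub.prems] DisjSub.hyps(2) _
          DisjSub.IH(2)])
      (use DisjSub.hyps(3) DisjSub.prems in blast)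
next
  case (DisjI g G f)
  have "supp M s f" using DisjI.IH[OF DisjI.prems] .
  moreover have "supp M {} g" using classical_empty[OF DisjI.hyps(1)] .
  ultimately have "s = s \<union> {} \<and> supp M s f \<and> supp M {} g" by simp
  then show ?case by auto
next
  case (DisjDup G f)
  have "supp M s f" using DisjDup.IH[OF DisjDup.prems] .
  then have "s = s \<union> s \<and> supp M s f \<and> supp M s f" by simp
  then show ?case by auto
next
  case (DisjComm G f g)
  obtain t u where "s = t \<union> u" "supp M t f" "supp M u g"
    using DisjComm.IH[OF DisjComm.prems] by auto
  then have "s = u \<union> t \<and> supp M u g \<and> supp M t f" by auto
  then show ?case by auto
next
  case (BotDisj G f)
  then show ?case by (auto simp: supp_Bot_iff)
next
  case (BotBotDisj G f g)
  then show ?case using not_supp_Disj_BotBot by blast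
next
  case (DiaMon f g G)
  have "supp M t g" if "supp M t f" for t using DiaMon.IH(1)[of t] that by simp
  then show ?case using supp_Dia_mono DiaMon.IH(2)[OF DiaMon.prems] by blast
next
  case (BoxMon fs g G)
  have "\<forall>f\<in>set fs. supp M s (Box f)" using BoxMon.IH(2) BoxMon.prems by blast
  then have "\<forall>w\<in>s. \<forall>f\<in>set fs. supp M (succs M w) f" by (auto simp: supp_Box_iff)
  then show ?case using BoxMon.IH(1) by (simp add: supp_Box_iff)
next
  case (DiaSep G f g)
  show ?case by (rule supp_Dia_Disj_NE_elim[OF DiaSep.IH[OF DiaSep.prems]])
next
  case (DiaJoin G f g)
  show ?case by (rule supp_Dia_Disj[OF DiaJoin.IH[OF DiaJoin.prems]])
next
  case (BoxDia G f)
  show ?case by (rule supp_Box_NE_Dia[OF BoxDia.IH[OF BoxDia.prems]])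
next
  case (BoxDiaJoin G f g)
  show ?case by (rule supp_Box_Dia_Disj[OF BoxDiaJoin.IH[OF BoxDiaJoin.prems]])
next
  case (Split G c g h)
  show ?case
    using supp_plug_split[OF Split.IH(1)[OF Split.prems]] Split.IH(2,3) Split.prems by auto
next
  case (DiaSplit G c g)
  show ?case by (rule supp_Dia_plug_split[OF DiaSplit.IH[OF DiaSplit.prems]])
next
  case (BoxSplit G c g)
  show ?case by (rule supp_Box_plug_split[OF BoxSplit.IH[OF BoxSplit.prems]])
qed (simp_all add: Box_def supp_Bot_iff)

theorem theorem4p34:
  fixes Phi :: "form set" and psi :: form
  assumes "ded Phi psi"
  shows "entails TYPE('w) Phi psi"
  using ded_sound[OF assms] unfolding entails_def by blast

end
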